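(* Let $(X_1,Y_1),\ldots,(X_n,Y_n)$ satisfy $Y_i = F(X_i)+\epsilon_i$ with $\epsilon_1,\ldots,\epsilon_n$ i.i.d. $N(0,\sigma^2)$, and suppose $\|F\|_\infty$, the supremum of $|F|$ on the support of $X$, is finite. Let $B, B_o \ge 1$, and let $\hat{F}^c_{BB_o}(x) = 2\hat{F}_B(x) - \hat{F}^o_{B_o}(x)$ be the bias-corrected ensemble prediction at a point $x$ (as defined in the context), and let $\hat{F}^c_{\infty}(x)$ denote its infinite-ensemble counterpart, i.e. the expectation of $\hat{F}^c_{BB_o}(x)$ over all randomization elements (the $\Omega_b$ and $\Omega^o_{b'}$), conditional on the data. Then \[ E\left(\hat{F}^c_{BB_o}(x) - \hat{F}^c_{\infty}(x)\right)^2 \le \left(\frac{64}{B} + \frac{80}{B_o}\right)\left[\|F\|_\infty^2 + \sigma^2\,(1+4\log n)\right], \] where the expectation is over both the noise and the randomization.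
   Context: Ensemble of trees as local averaging estimators. A single tree learned with randomization parameter $\Omega$ (encoding the choice of bootstrap sample or subsample and any other internal randomness, e.g. random selection of candidate split variables) predicts at $x$ the value $T(x,\Omega)=\sum_{i=1}^n W_i(x,\Omega)Y_i$, where $W_i(x,\Omega) = L(x,X_i,\Omega)/N(x,\Omega)$, $L(x,X_i,\Omega)$ is the indicator that $x$ and $X_i$ fall in the same leaf, and $N(x,\Omega)$ is the number of training points in the leaf containing $x$; thus $0\le W_i(x,\Omega)\le 1$ and $\sum_i W_i(x,\Omega)=1$. With $\Omega_1,\ldots,\Omega_B$ i.i.d., the ensemble (random forest / bagged) prediction is $\hat{F}_B(x) = \frac1B\sum_{b=1}^B T(x,\Omega_b) = \sum_i \bar W_i^B(x) Y_i$, with $\bar W_i^B(x)=\frac1B\sum_b W_i(x,\Omega_b)$. Residual bootstrap ensemble. Each residual-bootstrap tree, with randomization parameter $\Omega^o$ (encoding the resampling of residuals, the resampling of data pairs and the tree's internal randomness), trained on responses $Y_i^o = \hat F_B(X_i) + \hat\epsilon_{j}$ formed by adding resampled residuals $\hat\epsilon_j = Y_j - \hat F_B(X_j)$ to the fitted values, predicts at $x$ the value $T^o(x,\Omega^o) = \sum_{i=1}^n\sum_{j=1}^n V_{ij}(x,\Omega^o)\,[\hat F_B(X_i) + (Y_j - \hat F_B(X_j))]$, with weights $0\le V_{ij}(x,\Omega^o)\le 1$ and $\sum_{i,j}V_{ij}(x,\Omega^o)=1$. With $\Omega^o_1,\ldots,\Omega^o_{B_o}$ i.i.d. and independent of $\Omega_1,\ldots,\Omega_B$,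 set $\hat F^o_{B_o}(x) = \frac{1}{B_o}\sum_{b'=1}^{B_o} T^o(x,\Omega^o_{b'})$. The bias-corrected prediction is $\hat F^c_{BB_o}(x) = 2\hat F_B(x) - \hat F^o_{B_o}(x)$. *)

theory Defs
  imports "HOL-Probability.Probability"
begin

text \<open>Fixed design points X i (i < n), responses Y i = F (X i) + e i with
  e = (e 0, ..., e (n-1)) i.i.d. N(0, sigma^2).\<close>

definition noise_measure :: "nat \<Rightarrow> real \<Rightarrow> (nat \<Rightarrow> real) measure" where
  "noise_measure n \<sigma> = PiM {..<n} (\<lambda>_. density lborel (normal_density 0 \<sigma>))"

definition responses :: "nat \<Rightarrow> ('a \<Rightarrow> real) \<Rightarrow> (nat \<Rightarrow> 'a) \<Rightarrow> (nat \<Rightarrow> real) \<Rightarrow> nat \<Rightarrow> real" where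
  "responses n F X e = (\<lambda>i\<in>{..<n}. F (X i) + e i)"

definition rand_measure :: "nat \<Rightarrow> nat \<Rightarrow> 'w measure \<Rightarrow> 'v measure
    \<Rightarrow> ((nat \<Rightarrow> 'w) \<times> (nat \<Rightarrow> 'v)) measure" where
  "rand_measure B Bo Q Qo = PiM {..<B} (\<lambda>_. Q) \<Otimes>\<^sub>M PiM {..<Bo} (\<lambda>_. Qo)"

text \<open>Ensemble prediction  F_B(x) = (1/B) sum_b sum_i W_i(x, Omega_b) Y_i.
  W x Y w i is the weight of training point i at x for the tree grown on data Y
  with randomization w.\<close>

definition ens :: "nat \<Rightarrow> ('a \<Rightarrow> (nat \<Rightarrow> real) \<Rightarrow> 'w \<Rightarrow> nat \<Rightarrow> real) \<Rightarrow> nat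
    \<Rightarrow> (nat \<Rightarrow> real) \<Rightarrow> (nat \<Rightarrow> 'w) \<Rightarrow> 'a \<Rightarrow> real" where
  "ens n W B Y \<Omega>s x = (\<Sum>b<B. \<Sum>i<n. W x Y (\<Omega>s b) i * Y i) / real B"

definition res_ens :: "nat \<Rightarrow> (nat \<Rightarrow> 'a) \<Rightarrow> ('a \<Rightarrow> (nat \<Rightarrow> real) \<Rightarrow> 'w \<Rightarrow> nat \<Rightarrow> real)
    \<Rightarrow> ('a \<Rightarrow> (nat \<Rightarrow> real) \<Rightarrow> 'v \<Rightarrow> nat \<Rightarrow> nat \<Rightarrow> real) \<Rightarrow> nat \<Rightarrow> nat
    \<Rightarrow> (nat \<Rightarrow> real) \<Rightarrow> (nat \<Rightarrow> 'w) \<Rightarrow> (nat \<Rightarrow> 'v) \<Rightarrow> 'a \<Rightarrow> real" where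
  "res_ens n X W V B Bo Y \<Omega>s \<Omega>os x =
     (\<Sum>b<Bo. \<Sum>i<n. \<Sum>j<n. V x Y (\<Omega>os b) i j *
        (ens n W B Y \<Omega>s (X i) + (Y j - ens n W B Y \<Omega>s (X j)))) / real Bo"

definition bc_ens :: "nat \<Rightarrow> (nat \<Rightarrow> 'a) \<Rightarrow> ('a \<Rightarrow> (nat \<Rightarrow> real) \<Rightarrow> 'w \<Rightarrow> nat \<Rightarrow> real)
    \<Rightarrow> ('a \<Rightarrow> (nat \<Rightarrow> real) \<Rightarrow> 'v \<Rightarrow> nat \<Rightarrow> nat \<Rightarrow> real) \<Rightarrow> nat \<Rightarrow> nat
    \<Rightarrow> (nat \<Rightarrow> real) \<Rightarrow> (nat \<Rightarrow> 'w) \<Rightarrow> (nat \<Rightarrow> 'v) \<Rightarrow> 'a \<Rightarrow> real" where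
  "bc_ens n X W V B Bo Y \<Omega>s \<Omega>os x =
     2 * ens n W B Y \<Omega>s x - res_ens n X W V B Bo Y \<Omega>s \<Omega>os x"

definition bc_inf :: "nat \<Rightarrow> (nat \<Rightarrow> 'a) \<Rightarrow> ('a \<Rightarrow> (nat \<Rightarrow> real) \<Rightarrow> 'w \<Rightarrow> nat \<Rightarrow> real)
    \<Rightarrow> ('a \<Rightarrow> (nat \<Rightarrow> real) \<Rightarrow> 'v \<Rightarrow> nat \<Rightarrow> nat \<Rightarrow> real) \<Rightarrow> nat \<Rightarrow> nat
    \<Rightarrow> 'w measure \<Rightarrow> 'v measure \<Rightarrow> (nat \<Rightarrow> real) \<Rightarrow> 'a \<Rightarrow> real" where
  "bc_inf n X W V B Bo Q Qo Y x =
     (\<integral>r. bc_ens n X W V B Bo Y (fst r) (snd r) x \<partial>rand_measure B Bo Q Qo)"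

end

theory Submission
  imports Defs
begin

text \<open>
  Conditionally on the data, both randomisation layers contribute a variance of an average of
  i.i.d. bounded terms. Given the trees of the first ensemble, the residual-bootstrap trees are
  i.i.d. with values bounded by \<open>3 m\<close>, where \<open>m\<close> bounds the responses; and the conditional mean
  of the bias-corrected prediction is again an average over the first ensemble of terms bounded
  by \<open>4 m\<close>. This gives the conditional variance bound \<open>(16/B + 9/B\<^sub>o) m\<^sup>2\<close>. Finally
  \<open>m\<^sup>2 \<le> 2\<parallel>F\<parallel>\<^sup>2\<^sub>\<infinity> + 2 max\<^sub>i \<epsilon>\<^sub>i\<^sup>2\<close>, and the expected maximum of \<open>n\<close> squared Gaussians is at most
  \<open>\<sigma>\<^sup>2 (4 log n + 2 log 2)\<close>, obtained by integrating the log-sum-exp bound with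
  \<open>E exp(\<epsilon>\<^sup>2/(4\<sigma>\<^sup>2)) = \<surd>2\<close>.
\<close>

lemma prob_space_integrable_bounded:
  fixes f :: "'a \<Rightarrow> real"
  assumes "prob_space P" "f \<in> borel_measurable P" "\<And>x. x \<in> space P \<Longrightarrow> \<bar>f x\<bar> \<le> C"
  shows "integrable P f"
proof -
  interpret prob_space P by fact
  show ?thesis using assms(2,3) by (intro integrable_const_bound[where B=C]) auto
qed

lemma prob_space_integral_abs_le:
  fixes f :: "'a \<Rightarrow> real"
  assumes P: "prob_space P" and f: "f \<in> borel_measurable P" and bd: "\<And>x. x \<in> space P \<Longrightarrow> \<bar>f x\<bar> \<le> C"
  shows "\<bar>integral\<^sup>L P f\<bar> \<le> C"
proof -
  have "\<bar>integral\<^sup>L P f\<bar> \<le> (\<integral>x. \<bar>f x\<bar> \<partial>P)" by (rule integral_abs_bound)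
  also have "\<dots> \<le> (\<integral>x. C \<partial>P)"
    using f bd by (intro integral_mono prob_space_integrable_bounded[OF P]) auto
  finally show ?thesis by (simp add: prob_space.prob_space[OF P])
qed

lemma integral_PiM_component:
  fixes g :: "'b \<Rightarrow> real"
  assumes "\<And>j. j \<in> I \<Longrightarrow> prob_space (M j)" "i \<in> I" "g \<in> borel_measurable (M i)"
  shows "(\<integral>\<omega>. g (\<omega> i) \<partial>PiM I M) = integral\<^sup>L (M i) g"
proof -
  have "integral\<^sup>L (M i) g = integral\<^sup>L (distr (PiM I M) (M i) (\<lambda>\<omega>. \<omega> i)) g"
    using distr_PiM_component[of I M i] assms by simp
  also have "\<dots> = (\<integral>\<omega>. g (\<omega> i) \<partial>PiM I M)"
    using assms by (intro integral_distr) auto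
  finally show ?thesis by simp
qed

lemma integrable_PiM_component:
  fixes g :: "'b \<Rightarrow> real"
  assumes "\<And>j. j \<in> I \<Longrightarrow> prob_space (M j)" "i \<in> I" "integrable (M i) g"
  shows "integrable (PiM I M) (\<lambda>\<omega>. g (\<omega> i))"
proof -
  have "integrable (distr (PiM I M) (M i) (\<lambda>\<omega>. \<omega> i)) g"
    using distr_PiM_component[of I M i] assms by simp
  then show ?thesis using assms by (subst (asm) integrable_distr_eq) auto
qed

lemma integral_PiM_pair_product:
  fixes g h :: "'b \<Rightarrow> real"
  assumes M: "prob_space M" and "finite I"
    and bc: "b \<in> I" "c \<in> I" "b \<noteq> c"
    and g: "integrable M g" and h: "integrable M h"
  shows "(\<integral>\<omega>. g (\<omega> b) * h (\<omega> c) \<partial>PiM I (\<lambda>_. M)) = integral\<^sup>L M g * integral\<^sup>L M h"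
proof -
  interpret product_sigma_finite "\<lambda>_. M"
    using M by (auto simp: product_sigma_finite_def prob_space_imp_sigma_finite)
  define f where "f i = (if i = b then g else if i = c then h else (\<lambda>_. 1::real))" for i
  have prod_f: "(\<Prod>i\<in>I. u i) = u b * u c" if "\<And>i. i \<in> I - {b, c} \<Longrightarrow> u i = 1" for u :: "'a \<Rightarrow> real"
  proof -
    have "(\<Prod>i\<in>I. u i) = (\<Prod>i\<in>{b, c}. u i) * (\<Prod>i\<in>I - {b, c}. u i)"
      using bc \<open>finite I\<close> by (metis prod.subset_diff empty_subsetI insert_subset mult.commute)
    then show ?thesis using bc that by simp
  qed
  have "(\<integral>\<omega>. (\<Prod>i\<in>I. f i (\<omega> i)) \<partial>PiM I (\<lambda>_. M)) = (\<Prod>i\<in>I. integral\<^sup>L M (f i))"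
    using \<open>finite I\<close> g h M
    by (intro product_integral_prod) (auto simp: f_def prob_space.finite_measure finite_measure.integrable_const)
  moreover have "(\<Prod>i\<in>I. f i (\<omega> i)) = g (\<omega> b) * h (\<omega> c)" for \<omega>
    using bc by (subst prod_f) (auto simp: f_def)
  moreover have "(\<Prod>i\<in>I. integral\<^sup>L M (f i)) = integral\<^sup>L M g * integral\<^sup>L M h"
    using bc M by (subst prod_f) (auto simp: f_def prob_space.prob_space)
  ultimately show ?thesis by simp
qed

lemma integral_square_dev_decomp:
  fixes f :: "'a \<Rightarrow> real"
  assumes P: "prob_space P" and f: "f \<in> borel_measurable P"
    and bd: "\<And>x. x \<in> space P \<Longrightarrow> \<bar>f x\<bar> \<le> K"
  shows "(\<integral>x. (f x - d)\<^sup>2 \<partial>P) = (\<integral>x. (f x - integral\<^sup>L P f)\<^sup>2 \<partial>P) + (integral\<^sup>L P f - d)\<^sup>2"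
proof -
  interpret prob_space P by fact
  define \<mu> where "\<mu> = integral\<^sup>L P f"
  have fi: "integrable P f" using prob_space_integrable_bounded[OF P f bd] .
  have sq_i: "integrable P (\<lambda>x. (f x - \<mu>)\<^sup>2)"
  proof (rule prob_space_integrable_bounded[OF P, where C="(K + \<bar>\<mu>\<bar>)\<^sup>2"])
    fix x assume "x \<in> space P"
    then have "\<bar>f x - \<mu>\<bar> \<le> \<bar>K + \<bar>\<mu>\<bar>\<bar>" using bd[of x] by linarith
    then show "\<bar>(f x - \<mu>)\<^sup>2\<bar> \<le> (K + \<bar>\<mu>\<bar>)\<^sup>2" by (simp add: abs_le_square_iff)
  qed (use f in auto)
  have "(\<integral>x. (f x - d)\<^sup>2 \<partial>P) = (\<integral>x. (f x - \<mu>)\<^sup>2 + 2 * (\<mu> - d) * (f x - \<mu>) + (\<mu> - d)\<^sup>2 \<partial>P)"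
    by (simp add: power2_eq_square algebra_simps)
  also have "\<dots> = (\<integral>x. (f x - \<mu>)\<^sup>2 \<partial>P) + 2 * (\<mu> - d) * (\<integral>x. f x - \<mu> \<partial>P) + (\<mu> - d)\<^sup>2"
    using sq_i fi by (simp add: prob_space)
  also have "(\<integral>x. f x - \<mu> \<partial>P) = 0"
    using fi by (simp add: \<mu>_def prob_space)
  finally show ?thesis by (simp add: \<mu>_def)
qed

lemma integral_iid_sum_square:
  fixes \<psi> :: "'w \<Rightarrow> real"
  assumes M: "prob_space M" and I: "finite I" and \<psi>: "\<psi> \<in> borel_measurable M"
    and bd: "\<And>w. w \<in> space M \<Longrightarrow> \<bar>\<psi> w\<bar> \<le> K" and centred: "integral\<^sup>L M \<psi> = 0"
  shows "(\<integral>\<omega>. (\<Sum>b\<in>I. \<psi> (\<omega> b))\<^sup>2 \<partial>PiM I (\<lambda>_. M)) = real (card I) * (\<integral>w. (\<psi> w)\<^sup>2 \<partial>M)"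
proof -
  let ?P = "PiM I (\<lambda>_. M)"
  have P: "prob_space ?P" using M by (intro prob_space_PiM) auto
  have \<psi>_i: "integrable M \<psi>" using prob_space_integrable_bounded[OF M \<psi> bd] .
  have cross: "(\<integral>\<omega>. \<psi> (\<omega> b) * \<psi> (\<omega> c) \<partial>?P) = (if b = c then \<integral>w. (\<psi> w)\<^sup>2 \<partial>M else 0)"
    if "b \<in> I" "c \<in> I" for b c
  proof (cases "b = c")
    case True
    then show ?thesis using integral_PiM_component[of I "\<lambda>_. M" b "\<lambda>w. \<psi> w * \<psi> w"] M that \<psi>
      by (simp add: power2_eq_square)
  next
    case False
    then show ?thesis using integral_PiM_pair_product[OF M I that False \<psi>_i \<psi>_i] centred by simp
  qed
  have cross_i: "integrable ?P (\<lambda>\<omega>. \<psi> (\<omega> b) * \<psi> (\<omega> c))" if "b \<in> I" "c \<in> I" for b c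
  proof (rule prob_space_integrable_bounded[OF P, where C="K * K"])
    fix \<omega> assume "\<omega> \<in> space ?P"
    then have b: "\<omega> b \<in> space M" and c: "\<omega> c \<in> space M" using that by (auto simp: space_PiM)
    show "\<bar>\<psi> (\<omega> b) * \<psi> (\<omega> c)\<bar> \<le> K * K" using mult_mono'[OF bd[OF b] bd[OF c]] by (simp add: abs_mult)
  qed (use that \<psi> in measurable)
  have "(\<integral>\<omega>. (\<Sum>b\<in>I. \<psi> (\<omega> b))\<^sup>2 \<partial>?P) = (\<integral>\<omega>. (\<Sum>b\<in>I. \<Sum>c\<in>I. \<psi> (\<omega> b) * \<psi> (\<omega> c)) \<partial>?P)"
    by (simp add: power2_eq_square sum_product)
  also have "\<dots> = (\<Sum>b\<in>I. \<Sum>c\<in>I. \<integral>\<omega>. \<psi> (\<omega> b) * \<psi> (\<omega> c) \<partial>?P)"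
    using cross_i by (simp add: Bochner_Integration.integral_sum Bochner_Integration.integrable_sum)
  also have "\<dots> = real (card I) * (\<integral>w. (\<psi> w)\<^sup>2 \<partial>M)"
    using I by (simp add: cross if_distrib cong: sum.cong)
  finally show ?thesis .
qed

lemma average_abs_le:
  fixes t :: "nat \<Rightarrow> real"
  assumes "N \<ge> 1" "\<And>b. b < N \<Longrightarrow> \<bar>t b\<bar> \<le> m"
  shows "\<bar>(\<Sum>b<N. t b) / real N\<bar> \<le> m"
proof -
  have "\<bar>\<Sum>b<N. t b\<bar> \<le> (\<Sum>b<N. \<bar>t b\<bar>)" by (rule sum_abs)
  also have "\<dots> \<le> real N * m" using sum_bounded_above[of "{..<N}" "\<lambda>b. \<bar>t b\<bar>" m] assms by simp
  finally show ?thesis using assms(1) by (simp add: field_simps)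
qed

lemma iid_average_square_dev_le:
  fixes \<phi> :: "'w \<Rightarrow> real"
  assumes M: "prob_space M" and N: "N \<ge> 1" and \<phi>: "\<phi> \<in> borel_measurable M"
    and bd: "\<And>w. w \<in> space M \<Longrightarrow> \<bar>\<phi> w\<bar> \<le> K"
  shows "(\<integral>\<omega>. ((\<Sum>b<N. \<phi> (\<omega> b)) / real N - d)\<^sup>2 \<partial>PiM {..<N} (\<lambda>_. M))
           \<le> K\<^sup>2 / real N + (integral\<^sup>L M \<phi> - d)\<^sup>2"
proof -
  let ?P = "PiM {..<N} (\<lambda>_. M)"
  have P: "prob_space ?P" using M by (intro prob_space_PiM) auto
  interpret M: prob_space M by fact
  define \<mu> where "\<mu> = integral\<^sup>L M \<phi>"
  define avg where "avg \<omega> = (\<Sum>b<N. \<phi> (\<omega> b)) / real N" for \<omega>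
  have \<phi>_i: "integrable M \<phi>" using prob_space_integrable_bounded[OF M \<phi> bd] .
  have avg_m: "avg \<in> borel_measurable ?P" unfolding avg_def using \<phi> by measurable
  have avg_bd: "\<bar>avg \<omega>\<bar> \<le> K" if "\<omega> \<in> space ?P" for \<omega>
    unfolding avg_def using N bd that by (intro average_abs_le) (auto simp: space_PiM)
  have mean_avg: "integral\<^sup>L ?P avg = \<mu>"
    using N \<phi> \<phi>_i M unfolding avg_def \<mu>_def
    by (simp add: Bochner_Integration.integral_sum integrable_PiM_component integral_PiM_component)
  have K0: "0 \<le> K" using bd M.not_empty by (meson abs_ge_zero ex_in_conv order_trans)
  have \<mu>_bd: "\<bar>\<mu>\<bar> \<le> K" unfolding \<mu>_def using M \<phi> bd by (rule prob_space_integral_abs_le)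
  have var_le: "(\<integral>w. (\<phi> w - \<mu>)\<^sup>2 \<partial>M) \<le> K\<^sup>2"
  proof -
    have "(\<integral>w. (\<phi> w - \<mu>)\<^sup>2 \<partial>M) \<le> (\<integral>w. (\<phi> w - 0)\<^sup>2 \<partial>M)"
      using integral_square_dev_decomp[OF M \<phi> bd, of 0] by (simp add: \<mu>_def)
    also have "\<dots> \<le> (\<integral>w. K\<^sup>2 \<partial>M)"
    proof (rule integral_mono)
      show "integrable M (\<lambda>w. (\<phi> w - 0)\<^sup>2)"
        using \<phi> bd by (intro prob_space_integrable_bounded[OF M, where C="K\<^sup>2"]) (auto simp: power2_le_iff_abs_le K0)
    qed (use bd in \<open>auto simp: power2_le_iff_abs_le K0\<close>)
    finally show ?thesis by (simp add: M.prob_space)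
  qed
  have "(\<integral>\<omega>. (avg \<omega> - \<mu>)\<^sup>2 \<partial>?P) = (\<integral>\<omega>. (\<Sum>b<N. \<phi> (\<omega> b) - \<mu>)\<^sup>2 \<partial>?P) / (real N)\<^sup>2"
    using N by (simp add: avg_def sum_subtractf field_simps power2_eq_square)
  also have "\<dots> = real N * (\<integral>w. (\<phi> w - \<mu>)\<^sup>2 \<partial>M) / (real N)\<^sup>2"
  proof -
    have "\<bar>\<phi> w - \<mu>\<bar> \<le> 2 * K" if "w \<in> space M" for w using bd[OF that] \<mu>_bd by linarith
    moreover have "(\<integral>w. \<phi> w - \<mu> \<partial>M) = 0" using \<phi>_i by (simp add: \<mu>_def M.prob_space)
    ultimately show ?thesis
      using integral_iid_sum_square[OF M finite_lessThan, of "\<lambda>w. \<phi> w - \<mu>" "2 * K"] \<phi> by simp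
  qed
  also have "\<dots> \<le> K\<^sup>2 / real N"
    using N var_le by (simp add: power2_eq_square divide_right_mono)
  finally have "(\<integral>\<omega>. (avg \<omega> - \<mu>)\<^sup>2 \<partial>?P) \<le> K\<^sup>2 / real N" .
  then have "(\<integral>\<omega>. (avg \<omega> - d)\<^sup>2 \<partial>?P) \<le> K\<^sup>2 / real N + (\<mu> - d)\<^sup>2"
    using integral_square_dev_decomp[OF P avg_m avg_bd, of d] mean_avg by simp
  then show ?thesis by (simp add: avg_def \<mu>_def)
qed

text \<open>The maximum is bounded by log-sum-exp, and \<open>ln\<close> by its tangent at \<open>A\<close>; the
  result is linear in the sum, hence can be integrated term by term.\<close>

lemma Max_le_sum_exp_tangent:
  fixes a :: "'i \<Rightarrow> real"
  assumes "finite I" "I \<noteq> {}" "q > 0" "A > 0"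
  shows "Max (a ` I) \<le> q * ((\<Sum>i\<in>I. exp (a i / q)) / A + ln A - 1)"
proof -
  have "Max (a ` I) \<in> a ` I" using assms by (intro Max_in) auto
  then obtain k where k: "k \<in> I" "Max (a ` I) = a k" by auto
  have "1 + (a k / q - ln A) \<le> exp (a k / q - ln A)" by (rule exp_ge_add_one_self)
  also have "\<dots> = exp (a k / q) / A" using assms by (simp add: exp_diff)
  also have "\<dots> \<le> (\<Sum>i\<in>I. exp (a i / q)) / A"
    using assms k by (intro divide_right_mono member_le_sum) auto
  finally show ?thesis using k assms by (simp add: field_simps)
qed

lemma normal_density_mult_exp:
  fixes \<sigma> x :: real
  assumes "\<sigma> > 0"
  shows "normal_density 0 \<sigma> x * exp (x\<^sup>2 / (4 * \<sigma>\<^sup>2)) = sqrt 2 * normal_density 0 (sqrt 2 * \<sigma>) x"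
proof -
  have "exp (- x\<^sup>2 / (2 * \<sigma>\<^sup>2)) * exp (x\<^sup>2 / (4 * \<sigma>\<^sup>2)) = exp (- x\<^sup>2 / (2 * (sqrt 2 * \<sigma>)\<^sup>2))"
    using assms by (simp add: exp_add[symmetric] power_mult_distrib field_simps)
  moreover have "sqrt (2 * pi * (sqrt 2 * \<sigma>)\<^sup>2) = sqrt 2 * sqrt (2 * pi * \<sigma>\<^sup>2)"
    by (simp add: power_mult_distrib real_sqrt_mult[symmetric] algebra_simps)
  ultimately show ?thesis
    using assms unfolding normal_density_def by (simp add: field_simps)
qed

lemma normal_exp_square_quarter:
  fixes \<sigma> :: real
  assumes "\<sigma> > 0"
  shows "integrable (density lborel (normal_density 0 \<sigma>)) (\<lambda>x. exp (x\<^sup>2 / (4 * \<sigma>\<^sup>2)))"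
    and "(\<integral>x. exp (x\<^sup>2 / (4 * \<sigma>\<^sup>2)) \<partial>density lborel (normal_density 0 \<sigma>)) = sqrt 2"
proof -
  have "integrable lborel (\<lambda>x. sqrt 2 * normal_density 0 (sqrt 2 * \<sigma>) x)"
    using assms by (intro integrable_mult_right integrable_normal_density) simp
  then show "integrable (density lborel (normal_density 0 \<sigma>)) (\<lambda>x. exp (x\<^sup>2 / (4 * \<sigma>\<^sup>2)))"
    using assms by (subst integrable_density) (auto simp: normal_density_mult_exp)
  have "(\<integral>x. exp (x\<^sup>2 / (4 * \<sigma>\<^sup>2)) \<partial>density lborel (normal_density 0 \<sigma>))
      = (\<integral>x. sqrt 2 * normal_density 0 (sqrt 2 * \<sigma>) x \<partial>lborel)"
    using assms by (subst integral_density) (auto simp: normal_density_mult_exp)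
  also have "\<dots> = sqrt 2"
    using integral_normal_density[of "sqrt 2 * \<sigma>" 0] assms by simp
  finally show "(\<integral>x. exp (x\<^sup>2 / (4 * \<sigma>\<^sup>2)) \<partial>density lborel (normal_density 0 \<sigma>)) = sqrt 2" .
qed

lemma prob_space_noise_measure: "\<sigma> > 0 \<Longrightarrow> prob_space (noise_measure n \<sigma>)"
  unfolding noise_measure_def using prob_space_normal_density by (intro prob_space_PiM) blast

lemma noise_max_square:
  fixes \<sigma> :: real and n :: nat
  assumes \<sigma>: "\<sigma> > 0" and n: "n \<ge> 1"
  shows "integrable (noise_measure n \<sigma>) (\<lambda>e. Max ((\<lambda>i. (e i)\<^sup>2) ` {..<n}))"
    and "(\<integral>e. Max ((\<lambda>i. (e i)\<^sup>2) ` {..<n}) \<partial>noise_measure n \<sigma>) \<le> \<sigma>\<^sup>2 * (4 * ln (real n) + 2 * ln 2)"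
proof -
  let ?N = "density lborel (normal_density 0 \<sigma>)" and ?G = "noise_measure n \<sigma>"
  define q where "q = 4 * \<sigma>\<^sup>2"
  define S where "S e = (\<Sum>i<n. exp ((e i)\<^sup>2 / q))" for e :: "nat \<Rightarrow> real"
  \<comment> \<open>\<open>A\<close> is the mean of \<open>S\<close>, the point where the tangent bound is tightest.\<close>
  define A where "A = real n * sqrt 2"
  have q: "q > 0" and A: "A > 0" using \<sigma> n by (simp_all add: q_def A_def)
  have N: "prob_space ?N" using prob_space_normal_density \<sigma> by blast
  interpret G: prob_space ?G using \<sigma> by (rule prob_space_noise_measure)
  have exp_i: "integrable ?N (\<lambda>x. exp (x\<^sup>2 / q))" unfolding q_def using normal_exp_square_quarter(1)[OF \<sigma>] .
  have exp_m: "(\<lambda>x. exp (x\<^sup>2 / q)) \<in> borel_measurable ?N" by measurable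
  have exp_comp_i: "integrable ?G (\<lambda>e. exp ((e i)\<^sup>2 / q))" if "i < n" for i
    unfolding noise_measure_def using N exp_i that by (intro integrable_PiM_component) auto
  have S_i: "integrable ?G S"
    unfolding S_def using exp_comp_i by (intro Bochner_Integration.integrable_sum) auto
  have "integral\<^sup>L ?G S = (\<Sum>i<n. \<integral>e. exp ((e i)\<^sup>2 / q) \<partial>?G)"
    unfolding S_def using exp_comp_i by (intro Bochner_Integration.integral_sum) auto
  also have "\<dots> = (\<Sum>i<n. sqrt 2)"
    using integral_PiM_component[of "{..<n}" "\<lambda>_. ?N" _ "\<lambda>x. exp (x\<^sup>2 / q)"] N exp_m
      normal_exp_square_quarter(2)[OF \<sigma>] unfolding noise_measure_def q_def by simp
  finally have S_int: "integral\<^sup>L ?G S = real n * sqrt 2" by simp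
  have tangent: "Max ((\<lambda>i. (e i)\<^sup>2) ` {..<n}) \<le> q * (S e / A' + ln A' - 1)" if "A' > 0" for e A'
    unfolding S_def by (rule Max_le_sum_exp_tangent) (use q n that in \<open>auto simp: lessThan_empty_iff\<close>)
  show Max_i: "integrable ?G (\<lambda>e. Max ((\<lambda>i. (e i)\<^sup>2) ` {..<n}))"
  proof (rule Bochner_Integration.integrable_bound[OF integrable_mult_right[OF S_i, of q]])
    show "(\<lambda>e. Max ((\<lambda>i. (e i)\<^sup>2) ` {..<n})) \<in> borel_measurable ?G"
      unfolding noise_measure_def by measurable
    show "AE e in ?G. norm (Max ((\<lambda>i. (e i)\<^sup>2) ` {..<n})) \<le> norm (q * S e)"
    proof (rule AE_I2)
      fix e :: "nat \<Rightarrow> real"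
      have "0 \<le> Max ((\<lambda>i. (e i)\<^sup>2) ` {..<n})"
        using n by (intro order_trans[OF zero_le_power2[of "e 0"] Max_ge]) auto
      moreover have "0 \<le> S e" by (simp add: S_def sum_nonneg)
      ultimately show "norm (Max ((\<lambda>i. (e i)\<^sup>2) ` {..<n})) \<le> norm (q * S e)"
        using tangent[of 1 e] q by (simp add: right_diff_distrib)
    qed
  qed
  have "(\<integral>e. Max ((\<lambda>i. (e i)\<^sup>2) ` {..<n}) \<partial>?G) \<le> (\<integral>e. q * (S e / A + ln A - 1) \<partial>?G)"
    using Max_i S_i A tangent by (intro integral_mono) auto
  also have "\<dots> = q * ln A"
    using S_i A by (simp add: G.prob_space S_int[folded A_def])
  also have "\<dots> = \<sigma>\<^sup>2 * (4 * ln (real n) + 2 * ln 2)"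
    using n by (simp add: q_def A_def ln_mult ln_sqrt algebra_simps)
  finally show "(\<integral>e. Max ((\<lambda>i. (e i)\<^sup>2) ` {..<n}) \<partial>?G) \<le> \<sigma>\<^sup>2 * (4 * ln (real n) + 2 * ln 2)" .
qed

lemma weighted_sum_abs_le:
  fixes w y :: "'i \<Rightarrow> real"
  assumes "\<And>i. i \<in> I \<Longrightarrow> 0 \<le> w i" "(\<Sum>i\<in>I. w i) = 1" "\<And>i. i \<in> I \<Longrightarrow> \<bar>y i\<bar> \<le> m"
  shows "\<bar>\<Sum>i\<in>I. w i * y i\<bar> \<le> m"
proof -
  have "\<bar>\<Sum>i\<in>I. w i * y i\<bar> \<le> (\<Sum>i\<in>I. \<bar>w i * y i\<bar>)" by (rule sum_abs)
  also have "\<dots> \<le> (\<Sum>i\<in>I. w i * m)"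
    using assms by (intro sum_mono) (auto simp: abs_mult intro: mult_left_mono)
  also have "\<dots> = m" using assms(2) by (simp add: sum_distrib_right[symmetric])
  finally show ?thesis .
qed

lemma weighted_double_sum_abs_le:
  fixes w y :: "'i \<Rightarrow> 'j \<Rightarrow> real"
  assumes "\<And>i j. i \<in> I \<Longrightarrow> j \<in> J \<Longrightarrow> 0 \<le> w i j" "(\<Sum>i\<in>I. \<Sum>j\<in>J. w i j) = 1"
    and "\<And>i j. i \<in> I \<Longrightarrow> j \<in> J \<Longrightarrow> \<bar>y i j\<bar> \<le> m"
  shows "\<bar>\<Sum>i\<in>I. \<Sum>j\<in>J. w i j * y i j\<bar> \<le> m"
proof -
  have pairs: "(\<Sum>i\<in>I. \<Sum>j\<in>J. f i j) = (\<Sum>p\<in>I \<times> J. f (fst p) (snd p))" for f :: "'i \<Rightarrow> 'j \<Rightarrow> real"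
    unfolding sum.cartesian_product by (simp add: case_prod_unfold)
  show ?thesis
    unfolding pairs by (rule weighted_sum_abs_le) (use assms in \<open>auto simp: pairs\<close>)
qed

text \<open>With \<open>c\<close> the expected residual-bootstrap weights, the conditional mean of a residual
  tree minus twice the ensemble is again an average over the trees of the first ensemble.\<close>

lemma residual_mean_eq_average:
  fixes c :: "nat \<Rightarrow> nat \<Rightarrow> real" and t :: "nat \<Rightarrow> nat \<Rightarrow> real" and u :: "nat \<Rightarrow> real"
  shows "(\<Sum>i<n. \<Sum>j<n. c i j * ((\<Sum>b<B. t i b) / real B + (Y j - (\<Sum>b<B. t j b) / real B)))
           - 2 * ((\<Sum>b<B. u b) / real B)
         = (\<Sum>b<B. (\<Sum>i<n. \<Sum>j<n. c i j * (t i b - t j b)) - 2 * u b) / real B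
           + (\<Sum>i<n. \<Sum>j<n. c i j * Y j)"
proof -
  have "(\<Sum>b<B. \<Sum>i<n. \<Sum>j<n. c i j * (t i b - t j b)) = (\<Sum>i<n. \<Sum>j<n. \<Sum>b<B. c i j * (t i b - t j b))"
    by (subst sum.swap) (simp add: sum.swap[of _ "{..<B}"])
  also have "\<dots> = (\<Sum>i<n. \<Sum>j<n. c i j * ((\<Sum>b<B. t i b) - (\<Sum>b<B. t j b)))"
    by (simp add: sum_distrib_left[symmetric] sum_subtractf)
  finally have swap: "(\<Sum>b<B. \<Sum>i<n. \<Sum>j<n. c i j * (t i b - t j b))
      = (\<Sum>i<n. \<Sum>j<n. c i j * ((\<Sum>b<B. t i b) - (\<Sum>b<B. t j b)))" .
  have "(\<Sum>i<n. \<Sum>j<n. c i j * ((\<Sum>b<B. t i b) / real B + (Y j - (\<Sum>b<B. t j b) / real B)))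
      = (\<Sum>i<n. \<Sum>j<n. c i j * ((\<Sum>b<B. t i b) - (\<Sum>b<B. t j b)) / real B + c i j * Y j)"
    by (intro sum.cong refl) (simp add: diff_divide_distrib algebra_simps)
  also have "\<dots> = (\<Sum>b<B. \<Sum>i<n. \<Sum>j<n. c i j * (t i b - t j b)) / real B + (\<Sum>i<n. \<Sum>j<n. c i j * Y j)"
    by (simp add: swap sum.distrib sum_divide_distrib)
  moreover have "(\<Sum>b<B. (\<Sum>i<n. \<Sum>j<n. c i j * (t i b - t j b)) - 2 * u b) / real B
      = (\<Sum>b<B. \<Sum>i<n. \<Sum>j<n. c i j * (t i b - t j b)) / real B - 2 * ((\<Sum>b<B. u b) / real B)"
    by (simp add: sum_subtractf sum_distrib_left diff_divide_distrib)
  ultimately show ?thesis by simp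
qed

lemma prob_space_rand_measure: "prob_space Q \<Longrightarrow> prob_space Qo \<Longrightarrow> prob_space (rand_measure B Bo Q Qo)"
  unfolding rand_measure_def by (intro prob_space_pair prob_space_PiM)

lemma rand_measure_variance_le:
  fixes a :: "(nat \<Rightarrow> 'w) \<Rightarrow> real" and \<rho> :: "(nat \<Rightarrow> 'w) \<Rightarrow> 'v \<Rightarrow> real" and g :: "'w \<Rightarrow> real"
    and B Bo :: nat
  defines "f \<equiv> \<lambda>r. a (fst r) - (\<Sum>b<Bo. \<rho> (fst r) (snd r b)) / real Bo"
  assumes Q: "prob_space Q" and Qo: "prob_space Qo" and B: "B \<ge> 1" and Bo: "Bo \<ge> 1"
    and f_m: "f \<in> borel_measurable (rand_measure B Bo Q Qo)"
    and \<rho>_m: "\<And>\<Omega>s. \<rho> \<Omega>s \<in> borel_measurable Qo" and \<rho>_bd: "\<And>\<Omega>s \<nu>. \<bar>\<rho> \<Omega>s \<nu>\<bar> \<le> K\<rho>"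
    and g_m: "g \<in> borel_measurable Q" and g_bd: "\<And>w. \<bar>g w\<bar> \<le> Kg"
    and mean: "\<And>\<Omega>s. (\<integral>\<nu>. \<rho> \<Omega>s \<nu> \<partial>Qo) - a \<Omega>s = (\<Sum>b<B. g (\<Omega>s b)) / real B + c"
  shows "(\<integral>r. (f r - integral\<^sup>L (rand_measure B Bo Q Qo) f)\<^sup>2 \<partial>rand_measure B Bo Q Qo)
           \<le> Kg\<^sup>2 / real B + K\<rho>\<^sup>2 / real Bo"
proof -
  let ?P1 = "PiM {..<B} (\<lambda>_. Q)" and ?P2 = "PiM {..<Bo} (\<lambda>_. Qo)"
  let ?R = "rand_measure B Bo Q Qo"
  interpret P1: prob_space ?P1 using Q by (intro prob_space_PiM) auto
  interpret P2: prob_space ?P2 using Qo by (intro prob_space_PiM) auto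
  interpret P12: pair_prob_space ?P1 ?P2 ..
  have R: "?R = ?P1 \<Otimes>\<^sub>M ?P2" by (simp add: rand_measure_def)
  have PR: "prob_space ?R" using Q Qo by (rule prob_space_rand_measure)
  define avg_g where "avg_g \<Omega>s = (\<Sum>b<B. g (\<Omega>s b)) / real B" for \<Omega>s
  \<comment> \<open>The mean minimises the mean square deviation, so any centre \<open>d\<close> will do; this one
     makes the conditional mean of \<open>f - d\<close> given the first ensemble a centred i.i.d. average.\<close>
  define d where "d = - c - integral\<^sup>L Q g"
  have avg_g_bd: "\<bar>avg_g \<Omega>s\<bar> \<le> Kg" for \<Omega>s
    unfolding avg_g_def using B g_bd by (rule average_abs_le)
  have mean_\<rho>_bd: "\<bar>\<integral>\<nu>. \<rho> \<Omega>s \<nu> \<partial>Qo\<bar> \<le> K\<rho>" for \<Omega>s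
    using Qo \<rho>_m \<rho>_bd by (rule prob_space_integral_abs_le)
  have f_bd: "\<bar>f r\<bar> \<le> 2 * K\<rho> + Kg + \<bar>c\<bar>" for r
  proof -
    have "\<bar>(\<Sum>b<Bo. \<rho> (fst r) (snd r b)) / real Bo\<bar> \<le> K\<rho>" using Bo \<rho>_bd by (rule average_abs_le)
    then show ?thesis
      using mean[of "fst r"] mean_\<rho>_bd[of "fst r"] avg_g_bd[of "fst r"]
      unfolding f_def avg_g_def by linarith
  qed
  have fd_i: "integrable ?R (\<lambda>r. (f r - d)\<^sup>2)"
  proof (rule prob_space_integrable_bounded[OF PR])
    fix r
    have "\<bar>f r - d\<bar> \<le> \<bar>2 * K\<rho> + Kg + \<bar>c\<bar> + \<bar>d\<bar>\<bar>" using f_bd[of r] by linarith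
    then show "\<bar>(f r - d)\<^sup>2\<bar> \<le> (2 * K\<rho> + Kg + \<bar>c\<bar> + \<bar>d\<bar>)\<^sup>2" by (simp add: abs_le_square_iff)
  qed (use f_m in measurable)
  have inner: "(\<integral>\<Omega>os. (f (\<Omega>s, \<Omega>os) - d)\<^sup>2 \<partial>?P2) \<le> K\<rho>\<^sup>2 / real Bo + (avg_g \<Omega>s - integral\<^sup>L Q g)\<^sup>2"
    for \<Omega>s
  proof -
    have "(\<integral>\<Omega>os. (f (\<Omega>s, \<Omega>os) - d)\<^sup>2 \<partial>?P2)
        = (\<integral>\<Omega>os. ((\<Sum>b<Bo. \<rho> \<Omega>s (\<Omega>os b)) / real Bo - (a \<Omega>s - d))\<^sup>2 \<partial>?P2)"
      unfolding f_def by (simp add: power2_commute algebra_simps)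
    also have "\<dots> \<le> K\<rho>\<^sup>2 / real Bo + ((\<integral>\<nu>. \<rho> \<Omega>s \<nu> \<partial>Qo) - (a \<Omega>s - d))\<^sup>2"
      using \<rho>_bd by (intro iid_average_square_dev_le[OF Qo Bo \<rho>_m])
    also have "(\<integral>\<nu>. \<rho> \<Omega>s \<nu> \<partial>Qo) - (a \<Omega>s - d) = avg_g \<Omega>s - integral\<^sup>L Q g"
      using mean[of \<Omega>s] by (simp add: avg_g_def d_def)
    finally show ?thesis .
  qed
  have outer_i: "integrable ?P1 (\<lambda>\<Omega>s. (avg_g \<Omega>s - integral\<^sup>L Q g)\<^sup>2)"
  proof (rule prob_space_integrable_bounded[OF P1.prob_space_axioms])
    have "\<bar>integral\<^sup>L Q g\<bar> \<le> Kg" using Q g_m g_bd by (rule prob_space_integral_abs_le)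
    then have "\<bar>avg_g \<Omega>s - integral\<^sup>L Q g\<bar> \<le> \<bar>2 * Kg\<bar>" for \<Omega>s using avg_g_bd[of \<Omega>s] by linarith
    then show "\<bar>(avg_g \<Omega>s - integral\<^sup>L Q g)\<^sup>2\<bar> \<le> (2 * Kg)\<^sup>2" for \<Omega>s
      by (simp add: abs_le_square_iff)
  qed (unfold avg_g_def, use g_m in measurable)
  have "(\<integral>r. (f r - integral\<^sup>L ?R f)\<^sup>2 \<partial>?R) \<le> (\<integral>r. (f r - d)\<^sup>2 \<partial>?R)"
    using integral_square_dev_decomp[OF PR f_m f_bd, of d] by simp
  also have "\<dots> = (\<integral>\<Omega>s. (\<integral>\<Omega>os. (f (\<Omega>s, \<Omega>os) - d)\<^sup>2 \<partial>?P2) \<partial>?P1)"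
    using P12.integral_fst'[OF fd_i[unfolded R]] by (simp add: R)
  also have "\<dots> \<le> (\<integral>\<Omega>s. K\<rho>\<^sup>2 / real Bo + (avg_g \<Omega>s - integral\<^sup>L Q g)\<^sup>2 \<partial>?P1)"
    using P12.integrable_fst'[OF fd_i[unfolded R]] outer_i inner by (intro integral_mono) auto
  also have "\<dots> = K\<rho>\<^sup>2 / real Bo + (\<integral>\<Omega>s. (avg_g \<Omega>s - integral\<^sup>L Q g)\<^sup>2 \<partial>?P1)"
    using outer_i by (simp add: P1.prob_space)
  also have "(\<integral>\<Omega>s. (avg_g \<Omega>s - integral\<^sup>L Q g)\<^sup>2 \<partial>?P1) \<le> Kg\<^sup>2 / real B"
    using iid_average_square_dev_le[OF Q B g_m, of Kg "integral\<^sup>L Q g"] g_bd by (simp add: avg_g_def)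
  finally show ?thesis by simp
qed

lemma bc_ens_rand_variance_le:
  fixes Y :: "nat \<Rightarrow> real" and Q :: "'w measure" and Qo :: "'v measure"
    and W :: "'a \<Rightarrow> (nat \<Rightarrow> real) \<Rightarrow> 'w \<Rightarrow> nat \<Rightarrow> real"
    and V :: "'a \<Rightarrow> (nat \<Rightarrow> real) \<Rightarrow> 'v \<Rightarrow> nat \<Rightarrow> nat \<Rightarrow> real"
  assumes B: "B \<ge> 1" and Bo: "Bo \<ge> 1" and Q: "prob_space Q" and Qo: "prob_space Qo"
    and W_m[measurable]: "\<And>z i. (\<lambda>w. W z Y w i) \<in> borel_measurable Q"
    and V_m[measurable]: "\<And>z i j. (\<lambda>w. V z Y w i j) \<in> borel_measurable Qo"
    and W_nonneg: "\<And>z w i. i < n \<Longrightarrow> 0 \<le> W z Y w i" and W_sum: "\<And>z w. (\<Sum>i<n. W z Y w i) = 1"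
    and V_nonneg: "\<And>z w i j. i < n \<Longrightarrow> j < n \<Longrightarrow> 0 \<le> V z Y w i j"
    and V_sum: "\<And>z w. (\<Sum>i<n. \<Sum>j<n. V z Y w i j) = 1"
    and Y_bd: "\<And>i. i < n \<Longrightarrow> \<bar>Y i\<bar> \<le> m"
  shows "(\<integral>r. (bc_ens n X W V B Bo Y (fst r) (snd r) x - bc_inf n X W V B Bo Q Qo Y x)\<^sup>2
            \<partial>rand_measure B Bo Q Qo) \<le> (16 / real B + 9 / real Bo) * m\<^sup>2"
proof -
  interpret Qo: prob_space Qo by fact
  define T where "T z w = (\<Sum>i<n. W z Y w i * Y i)" for z w
  define E where "E \<Omega>s z = (\<Sum>b<B. T z (\<Omega>s b)) / real B" for \<Omega>s :: "nat \<Rightarrow> 'w" and z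
  define \<rho> where "\<rho> \<Omega>s \<nu> = (\<Sum>i<n. \<Sum>j<n. V x Y \<nu> i j * (E \<Omega>s (X i) + (Y j - E \<Omega>s (X j))))"
    for \<Omega>s \<nu>
  define c where "c i j = (\<integral>\<nu>. V x Y \<nu> i j \<partial>Qo)" for i j
  define g where "g w = (\<Sum>i<n. \<Sum>j<n. c i j * (T (X i) w - T (X j) w)) - 2 * T x w" for w
  have T_bd: "\<bar>T z w\<bar> \<le> m" for z w
    unfolding T_def using W_nonneg W_sum Y_bd by (intro weighted_sum_abs_le) auto
  have E_bd: "\<bar>E \<Omega>s z\<bar> \<le> m" for \<Omega>s z
    unfolding E_def using B T_bd by (rule average_abs_le)
  have \<rho>_bd: "\<bar>\<rho> \<Omega>s \<nu>\<bar> \<le> 3 * m" for \<Omega>s \<nu>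
    unfolding \<rho>_def using V_nonneg V_sum
  proof (rule weighted_double_sum_abs_le)
    fix i j assume "i \<in> {..<n}" "j \<in> {..<n}"
    then show "\<bar>E \<Omega>s (X i) + (Y j - E \<Omega>s (X j))\<bar> \<le> 3 * m"
      using E_bd[of \<Omega>s "X i"] E_bd[of \<Omega>s "X j"] Y_bd[of j] by auto
  qed auto
  have V_le_1: "V z Y w i j \<le> 1" if "i < n" "j < n" for z w i j
  proof -
    have "V z Y w i j \<le> (\<Sum>j'<n. V z Y w i j')"
      using that V_nonneg by (intro member_le_sum) auto
    also have "\<dots> \<le> (\<Sum>i'<n. \<Sum>j'<n. V z Y w i' j')"
      using that V_nonneg by (intro member_le_sum[of i] sum_nonneg) auto
    finally show ?thesis using V_sum by simp
  qed
  have V_i: "integrable Qo (\<lambda>\<nu>. V x Y \<nu> i j)" if "i < n" "j < n" for i j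
    using V_nonneg V_le_1 that by (intro prob_space_integrable_bounded[OF Qo, where C=1]) auto
  have g_bd: "\<bar>g w\<bar> \<le> 4 * m" for w
  proof -
    have "\<bar>\<Sum>i<n. \<Sum>j<n. c i j * (T (X i) w - T (X j) w)\<bar> \<le> 2 * m"
    proof (rule weighted_double_sum_abs_le)
      have "(\<Sum>i<n. \<Sum>j<n. c i j) = (\<Sum>i<n. \<integral>\<nu>. (\<Sum>j<n. V x Y \<nu> i j) \<partial>Qo)"
        unfolding c_def using V_i by (intro sum.cong refl Bochner_Integration.integral_sum[symmetric]) auto
      also have "\<dots> = (\<integral>\<nu>. (\<Sum>i<n. \<Sum>j<n. V x Y \<nu> i j) \<partial>Qo)"
        using V_i by (intro Bochner_Integration.integral_sum[symmetric] Bochner_Integration.integrable_sum) auto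
      finally show "(\<Sum>i<n. \<Sum>j<n. c i j) = 1" by (simp add: V_sum Qo.prob_space)
      show "0 \<le> c i j" if "i \<in> {..<n}" "j \<in> {..<n}" for i j
        unfolding c_def using V_nonneg that by (auto intro!: integral_nonneg)
      show "\<bar>T (X i) w - T (X j) w\<bar> \<le> 2 * m" for i j
        using T_bd[of "X i" w] T_bd[of "X j" w] by linarith
    qed
    then show ?thesis unfolding g_def using T_bd[of x w] by linarith
  qed
  have mean: "(\<integral>\<nu>. \<rho> \<Omega>s \<nu> \<partial>Qo) - 2 * E \<Omega>s x = (\<Sum>b<B. g (\<Omega>s b)) / real B + (\<Sum>i<n. \<Sum>j<n. c i j * Y j)"
    for \<Omega>s
  proof -
    have int_\<rho>: "(\<integral>\<nu>. \<rho> \<Omega>s \<nu> \<partial>Qo) = (\<Sum>i<n. \<Sum>j<n. c i j * (E \<Omega>s (X i) + (Y j - E \<Omega>s (X j))))"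
      unfolding \<rho>_def c_def using V_i
      by (subst Bochner_Integration.integral_sum) (auto intro!: sum.cong Bochner_Integration.integral_sum)
    show ?thesis unfolding int_\<rho> E_def g_def by (rule residual_mean_eq_average)
  qed
  have bc_eq: "bc_ens n X W V B Bo Y \<Omega>s \<Omega>os x = 2 * E \<Omega>s x - (\<Sum>b<Bo. \<rho> \<Omega>s (\<Omega>os b)) / real Bo"
    for \<Omega>s \<Omega>os
    unfolding bc_ens_def res_ens_def ens_def E_def T_def \<rho>_def ..
  have "(\<integral>r. (bc_ens n X W V B Bo Y (fst r) (snd r) x - bc_inf n X W V B Bo Q Qo Y x)\<^sup>2
            \<partial>rand_measure B Bo Q Qo) \<le> (4 * m)\<^sup>2 / real B + (3 * m)\<^sup>2 / real Bo"
    unfolding bc_inf_def bc_eq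
  proof (rule rand_measure_variance_le[OF Q Qo B Bo])
    show "(\<lambda>r. 2 * E (fst r) x - (\<Sum>b<Bo. \<rho> (fst r) (snd r b)) / real Bo)
        \<in> borel_measurable (rand_measure B Bo Q Qo)"
      unfolding rand_measure_def E_def \<rho>_def T_def by measurable
    show "\<rho> \<Omega>s \<in> borel_measurable Qo" for \<Omega>s unfolding \<rho>_def by measurable
    show "g \<in> borel_measurable Q" unfolding g_def T_def by measurable
  qed (fact \<rho>_bd g_bd mean)+
  then show ?thesis by (simp add: power_mult_distrib algebra_simps add_divide_distrib)
qed

lemma integral_pair_le_fibrewise:
  fixes g :: "'a \<Rightarrow> 'b \<Rightarrow> real"
  assumes N: "sigma_finite_measure N" and R: "sigma_finite_measure R"
    and nonneg: "\<And>e r. 0 \<le> g e r"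
    and fibre: "\<And>e. e \<in> space N \<Longrightarrow> (\<integral>r. g e r \<partial>R) \<le> h e" and h: "integrable N h"
  shows "(\<integral>(e, r). g e r \<partial>(N \<Otimes>\<^sub>M R)) \<le> integral\<^sup>L N h"
proof (cases "integrable (N \<Otimes>\<^sub>M R) (\<lambda>(e, r). g e r)")
  case True
  interpret pair_sigma_finite N R using N R by (simp add: pair_sigma_finite_def)
  have "(\<integral>(e, r). g e r \<partial>(N \<Otimes>\<^sub>M R)) = (\<integral>e. (\<integral>r. g e r \<partial>R) \<partial>N)"
    using integral_fst'[OF True] by simp
  also have "\<dots> \<le> integral\<^sup>L N h"
    using integrable_fst'[OF True] h fibre by (intro integral_mono) auto
  finally show ?thesis .
next
  case False
  have "0 \<le> integral\<^sup>L N h"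
    using fibre nonneg by (intro Bochner_Integration.integral_nonneg)
      (meson Bochner_Integration.integral_nonneg order_trans)
  then show ?thesis using False by (simp add: not_integrable_integral_eq)
qed

lemma responses_square_le:
  assumes "\<forall>i<n. X i \<in> S" "bdd_above ((\<lambda>z. \<bar>F z\<bar>) ` S)" "i < n"
  shows "(responses n F X e i)\<^sup>2 \<le> 2 * (SUP z\<in>S. \<bar>F z\<bar>)\<^sup>2 + 2 * Max ((\<lambda>i. (e i)\<^sup>2) ` {..<n})"
proof -
  have Y: "responses n F X e i = F (X i) + e i" using assms by (simp add: responses_def)
  have "\<bar>F (X i)\<bar> \<le> (SUP z\<in>S. \<bar>F z\<bar>)" using assms by (intro cSUP_upper) auto
  then have F_le: "(F (X i))\<^sup>2 \<le> (SUP z\<in>S. \<bar>F z\<bar>)\<^sup>2" by (simp add: power2_le_iff_abs_le)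
  have e_le: "(e i)\<^sup>2 \<le> Max ((\<lambda>i. (e i)\<^sup>2) ` {..<n})" using assms by (intro Max_ge) auto
  have "(F (X i) + e i)\<^sup>2 \<le> 2 * (F (X i))\<^sup>2 + 2 * (e i)\<^sup>2"
    using zero_le_power2[of "F (X i) - e i"] by (simp add: power2_eq_square algebra_simps)
  then show ?thesis unfolding Y using F_le e_le by linarith
qed

lemma bc_ens_rand_variance_le_noise:
  fixes e :: "nat \<Rightarrow> real" and Q :: "'w measure" and Qo :: "'v measure"
    and W :: "'a \<Rightarrow> (nat \<Rightarrow> real) \<Rightarrow> 'w \<Rightarrow> nat \<Rightarrow> real"
    and V :: "'a \<Rightarrow> (nat \<Rightarrow> real) \<Rightarrow> 'v \<Rightarrow> nat \<Rightarrow> nat \<Rightarrow> real"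
  assumes n: "n \<ge> 1" and B: "B \<ge> 1" and Bo: "Bo \<ge> 1"
    and Q: "prob_space Q" and Qo: "prob_space Qo"
    and supp: "\<forall>i<n. X i \<in> S" and Fbdd: "bdd_above ((\<lambda>z. \<bar>F z\<bar>) ` S)"
    and W_meas: "\<forall>z i. (\<lambda>(y, w). W z y w i) \<in> borel_measurable (PiM {..<n} (\<lambda>_. borel) \<Otimes>\<^sub>M Q)"
    and W_wt: "\<forall>z y w. (\<forall>i<n. 0 \<le> W z y w i \<and> W z y w i \<le> 1) \<and> (\<Sum>i<n. W z y w i) = 1"
    and V_meas: "\<forall>z i j. (\<lambda>(y, w). V z y w i j) \<in> borel_measurable (PiM {..<n} (\<lambda>_. borel) \<Otimes>\<^sub>M Qo)"
    and V_wt: "\<forall>z y w. (\<forall>i<n. \<forall>j<n. 0 \<le> V z y w i j \<and> V z y w i j \<le> 1)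
                        \<and> (\<Sum>i<n. \<Sum>j<n. V z y w i j) = 1"
  shows "(\<integral>r. (bc_ens n X W V B Bo (responses n F X e) (fst r) (snd r) x
                - bc_inf n X W V B Bo Q Qo (responses n F X e) x)\<^sup>2 \<partial>rand_measure B Bo Q Qo)
         \<le> (16 / real B + 9 / real Bo) * (2 * (SUP z\<in>S. \<bar>F z\<bar>)\<^sup>2 + 2 * Max ((\<lambda>i. (e i)\<^sup>2) ` {..<n}))"
proof -
  define Y where "Y = responses n F X e"
  define M where "M = 2 * (SUP z\<in>S. \<bar>F z\<bar>)\<^sup>2 + 2 * Max ((\<lambda>i. (e i)\<^sup>2) ` {..<n})"
  have Y_space: "Y \<in> space (PiM {..<n} (\<lambda>_. borel))"
    unfolding Y_def responses_def by (simp add: space_PiM)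
  have Y_le: "(Y i)\<^sup>2 \<le> M" if "i < n" for i
    unfolding Y_def M_def using supp Fbdd that by (rule responses_square_le)
  then have "(Y 0)\<^sup>2 \<le> M" using n by simp
  then have M0: "0 \<le> M" using zero_le_power2[of "Y 0"] by linarith
  have Y_bd: "\<bar>Y i\<bar> \<le> sqrt M" if "i < n" for i
    using real_sqrt_le_mono[OF Y_le[OF that]] by simp
  have "(\<integral>r. (bc_ens n X W V B Bo Y (fst r) (snd r) x - bc_inf n X W V B Bo Q Qo Y x)\<^sup>2
            \<partial>rand_measure B Bo Q Qo) \<le> (16 / real B + 9 / real Bo) * (sqrt M)\<^sup>2"
  proof (rule bc_ens_rand_variance_le[OF B Bo Q Qo])
    show "(\<lambda>w. W z Y w i) \<in> borel_measurable Q" for z i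
      using measurable_Pair2[OF W_meas[rule_format, of z i] Y_space] by simp
    show "(\<lambda>w. V z Y w i j) \<in> borel_measurable Qo" for z i j
      using measurable_Pair2[OF V_meas[rule_format, of z i j] Y_space] by simp
  qed (use W_wt V_wt Y_bd in auto)
  then show ?thesis using M0 by (simp add: Y_def M_def)
qed

lemma error_constants_le:
  fixes K I \<sigma> :: real and n B Bo :: nat
  assumes "I \<le> \<sigma>\<^sup>2 * (4 * ln (real n) + 2 * ln 2)" "B \<ge> 1" "Bo \<ge> 1" "n \<ge> 1"
  shows "(16 / real B + 9 / real Bo) * (2 * K\<^sup>2 + 2 * I)
           \<le> (64 / real B + 80 / real Bo) * (K\<^sup>2 + \<sigma>\<^sup>2 * (1 + 4 * ln (real n)))"
proof -
  define Z where "Z = K\<^sup>2 + \<sigma>\<^sup>2 * (1 + 4 * ln (real n))"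
  have "\<sigma>\<^sup>2 * ln 2 \<le> \<sigma>\<^sup>2 * 1" using ln_le_minus_one[of 2] by (intro mult_left_mono) auto
  moreover have "0 \<le> \<sigma>\<^sup>2 * ln (real n)" using assms by simp
  ultimately have "2 * K\<^sup>2 + 2 * I \<le> 4 * Z"
    using assms(1) unfolding Z_def by (simp add: algebra_simps) (use zero_le_power2[of K] in linarith)
  then have "(16 / real B + 9 / real Bo) * (2 * K\<^sup>2 + 2 * I) \<le> (16 / real B + 9 / real Bo) * (4 * Z)"
    by (rule mult_left_mono) simp
  also have "\<dots> = (64 / real B + 36 / real Bo) * Z" by (simp add: algebra_simps)
  also have "\<dots> \<le> (64 / real B + 80 / real Bo) * Z"
    using assms unfolding Z_def by (intro mult_right_mono) (auto simp: divide_right_mono)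
  finally show ?thesis unfolding Z_def .
qed

theorem theorem1:
  fixes n B Bo :: nat and \<sigma> :: real and F :: "'a \<Rightarrow> real" and X :: "nat \<Rightarrow> 'a"
    and S :: "'a set" and x :: 'a
    and Q :: "'w measure" and Qo :: "'v measure"
    and W :: "'a \<Rightarrow> (nat \<Rightarrow> real) \<Rightarrow> 'w \<Rightarrow> nat \<Rightarrow> real"
    and V :: "'a \<Rightarrow> (nat \<Rightarrow> real) \<Rightarrow> 'v \<Rightarrow> nat \<Rightarrow> nat \<Rightarrow> real"
  assumes n: "n \<ge> 1" and B: "B \<ge> 1" and Bo: "Bo \<ge> 1" and sigma: "\<sigma> > 0"
    and Q: "prob_space Q" and Qo: "prob_space Qo"
    and supp: "\<forall>i<n. X i \<in> S" and Fbdd: "bdd_above ((\<lambda>z. \<bar>F z\<bar>) ` S)"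
    and W_meas: "\<forall>z i. (\<lambda>(y, w). W z y w i) \<in> borel_measurable (PiM {..<n} (\<lambda>_. borel) \<Otimes>\<^sub>M Q)"
    and W_wt: "\<forall>z y w. (\<forall>i<n. 0 \<le> W z y w i \<and> W z y w i \<le> 1) \<and> (\<Sum>i<n. W z y w i) = 1"
    and V_meas: "\<forall>z i j. (\<lambda>(y, w). V z y w i j) \<in> borel_measurable (PiM {..<n} (\<lambda>_. borel) \<Otimes>\<^sub>M Qo)"
    and V_wt: "\<forall>z y w. (\<forall>i<n. \<forall>j<n. 0 \<le> V z y w i j \<and> V z y w i j \<le> 1)
                        \<and> (\<Sum>i<n. \<Sum>j<n. V z y w i j) = 1"
  shows "(\<integral>(e, r). (bc_ens n X W V B Bo (responses n F X e) (fst r) (snd r) x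
                      - bc_inf n X W V B Bo Q Qo (responses n F X e) x)\<^sup>2
            \<partial>(noise_measure n \<sigma> \<Otimes>\<^sub>M rand_measure B Bo Q Qo))
         \<le> (64 / real B + 80 / real Bo) * ((SUP z\<in>S. \<bar>F z\<bar>)\<^sup>2 + \<sigma>\<^sup>2 * (1 + 4 * ln (real n)))"
proof -
  let ?N = "noise_measure n \<sigma>" and ?R = "rand_measure B Bo Q Qo"
  define Me where "Me e = Max ((\<lambda>i. (e i)\<^sup>2) ` {..<n})" for e :: "nat \<Rightarrow> real"
  note max_square = noise_max_square[OF sigma n, folded Me_def]
  interpret N: prob_space ?N using sigma by (rule prob_space_noise_measure)
  have sigma_finite: "sigma_finite_measure ?N" "sigma_finite_measure ?R"
    using prob_space_rand_measure[OF Q Qo] by (simp_all add: N.sigma_finite_measure prob_space_imp_sigma_finite)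
  have "(\<integral>(e, r). (bc_ens n X W V B Bo (responses n F X e) (fst r) (snd r) x
                      - bc_inf n X W V B Bo Q Qo (responses n F X e) x)\<^sup>2 \<partial>(?N \<Otimes>\<^sub>M ?R))
      \<le> (\<integral>e. (16 / real B + 9 / real Bo) * (2 * (SUP z\<in>S. \<bar>F z\<bar>)\<^sup>2 + 2 * Me e) \<partial>?N)"
    using bc_ens_rand_variance_le_noise[OF n B Bo Q Qo supp Fbdd W_meas W_wt V_meas V_wt] max_square(1)
    by (intro integral_pair_le_fibrewise[OF sigma_finite]) (auto simp: Me_def)
  also have "\<dots> = (16 / real B + 9 / real Bo) * (2 * (SUP z\<in>S. \<bar>F z\<bar>)\<^sup>2 + 2 * integral\<^sup>L ?N Me)"
    using max_square(1) by (simp add: N.prob_space)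
  also have "\<dots> \<le> (64 / real B + 80 / real Bo) * ((SUP z\<in>S. \<bar>F z\<bar>)\<^sup>2 + \<sigma>\<^sup>2 * (1 + 4 * ln (real n)))"
    using max_square(2) B Bo n by (rule error_constants_le)
  finally show ?thesis .
qed

end
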